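(* Let $O=(U,\prec)$ be a CvT order on a finite set of operations $U=C\cup T$, $C\cap T=\varnothing$. Suppose that for every Cv-set $C_i$ and all $p,q\in C_i$, the operations $p$ and $q$ commute. Then every LAC system for $O$ is state convergent, i.e. for any two linear extensions $O_i=(U,<_i)$ and $O_j=(U,<_j)$ of $O$ we have $S(O_i)=S(O_j)$.
   Context: Operations are modeled as state transformers: there is a set of states $\Sigma$, an initial state $s_0\in\Sigma$, and each operation $u\in U$ is a function $u:\Sigma\to\Sigma$. For a linear order (sequence) $u_1<u_2<\dots<u_n$ of $U$, its resulting state is $S=u_n(\cdots u_2(u_1(s_0))\cdots)$. Two operations $p,q$ commute if $p\circ q=q\circ p$. A CvT order is a strict partial order $O=(U,\prec)$ on $U=C\cup T$ ($C\cap T=\varnothing$) such that (i) any two distinct $u,v\in T$ are comparable ($u\prec v$ or $v\prec u$), and (ii) every $p\in C$ and $u\in T$ are comparable ($p\prec u$ or $u\prec p$). A Cv-set is a subset $C_i\subseteq C$ such that (a) any two elements of $C_i$ are incomparable under $\prec$, and (b) every $p\in C\setminus C_i$ is comparable to some $q\in C_i$. A replicated system provides local atomic consistency (LAC) if each site applies the operations of $U$ according to some linear extension of the CvT order. An LAC system is state convergent if all linear extensions of the underlying CvT order yield the same resulting state. *)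

theory Defs
  imports Main
begin

(* Operations are labels of type 'u; each label u denotes the state transformer
   app u :: 's => 's. prec is the (strict) order relation of the CvT order on U. *)

definition strict_po_on :: "'u set \<Rightarrow> ('u \<Rightarrow> 'u \<Rightarrow> bool) \<Rightarrow> bool" where
  "strict_po_on U prec \<longleftrightarrow>
     (\<forall>x. \<forall>y. prec x y \<longrightarrow> x \<in> U \<and> y \<in> U) \<and>
     (\<forall>x\<in>U. \<not> prec x x) \<and>
     (\<forall>x\<in>U. \<forall>y\<in>U. \<forall>z\<in>U. prec x y \<longrightarrow> prec y z \<longrightarrow> prec x z)"

definition comparable :: "('u \<Rightarrow> 'u \<Rightarrow> bool) \<Rightarrow> 'u \<Rightarrow> 'u \<Rightarrow> bool" where
  "comparable prec u v \<longleftrightarrow> prec u v \<or> prec v u"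

definition CvT_order :: "'u set \<Rightarrow> 'u set \<Rightarrow> ('u \<Rightarrow> 'u \<Rightarrow> bool) \<Rightarrow> bool" where
  "CvT_order C T prec \<longleftrightarrow>
     C \<inter> T = {} \<and> strict_po_on (C \<union> T) prec \<and>
     (\<forall>u\<in>T. \<forall>v\<in>T. u \<noteq> v \<longrightarrow> comparable prec u v) \<and>
     (\<forall>p\<in>C. \<forall>u\<in>T. comparable prec p u)"

definition Cv_set :: "'u set \<Rightarrow> ('u \<Rightarrow> 'u \<Rightarrow> bool) \<Rightarrow> 'u set \<Rightarrow> bool" where
  "Cv_set C prec Ci \<longleftrightarrow>
     Ci \<subseteq> C \<and>
     (\<forall>p\<in>Ci. \<forall>q\<in>Ci. \<not> comparable prec p q) \<and>
     (\<forall>p\<in>C - Ci. \<exists>q\<in>Ci. comparable prec p q)"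

definition commute :: "('s \<Rightarrow> 's) \<Rightarrow> ('s \<Rightarrow> 's) \<Rightarrow> bool" where
  "commute f g \<longleftrightarrow> f \<circ> g = g \<circ> f"

definition linear_extension :: "'u set \<Rightarrow> ('u \<Rightarrow> 'u \<Rightarrow> bool) \<Rightarrow> 'u list \<Rightarrow> bool" where
  "linear_extension U prec xs \<longleftrightarrow>
     distinct xs \<and> set xs = U \<and>
     (\<forall>i<length xs. \<forall>j<length xs. prec (xs ! i) (xs ! j) \<longrightarrow> i < j)"

(* Resulting state u_n(...u_1(s0)...) : the first list element is applied first. *)
definition result_state :: "('u \<Rightarrow> 's \<Rightarrow> 's) \<Rightarrow> 's \<Rightarrow> 'u list \<Rightarrow> 's" where
  "result_state app s0 xs = fold app xs s0"

end

theory Submission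
  imports Defs
begin

text \<open>
  Both linear extensions list the same operations and are sorted for the relation
  \<open>\<lambda>a b. \<not> prec b a\<close>; two operations related by it in both directions are incomparable.
  In a CvT order incomparable operations lie in \<open>C\<close>, and since \<open>C\<close> is finite the antichain
  formed by them extends to a maximal one, i.e. to a Cv-set, so they commute. Folding two
  such sorted permutations then gives the same result: the first operation of one list
  commutes with every operation preceding it in the other list and can be moved to the front.
\<close>

lemma comp_fold_commute:
  assumes "\<forall>y\<in>set ys. commute (f x) (f y)"
  shows "f x \<circ> fold f ys = fold f ys \<circ> f x"
  using assms
proof (induction ys)
  case Nil
  then show ?case by simp
next
  case (Cons y ys)
  have IH: "f x \<circ> fold f ys = fold f ys \<circ> f x"
    using Cons.prems by (intro Cons.IH) simp
  have xy: "f x \<circ> f y = f y \<circ> f x"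
    using Cons.prems by (simp add: commute_def)
  have "f x \<circ> fold f (y # ys) = (f x \<circ> fold f ys) \<circ> f y" by (simp add: comp_assoc)
  also have "\<dots> = fold f ys \<circ> (f x \<circ> f y)" by (simp add: IH comp_assoc)
  also have "\<dots> = fold f (y # ys) \<circ> f x" by (simp add: xy comp_assoc)
  finally show ?case .
qed

lemma fold_eq_if_sorted_wrt_commute:
  assumes "distinct xs" "distinct ys" "set xs = set ys"
    and "sorted_wrt R xs" "sorted_wrt R ys"
    and "\<forall>x\<in>set xs. \<forall>y\<in>set xs. R x y \<longrightarrow> R y x \<longrightarrow> commute (f x) (f y)"
  shows "fold f xs = fold f ys"
  using assms
proof (induction xs arbitrary: ys)
  case Nil
  then show ?case by simp
next
  case (Cons x xs)
  then obtain ys1 ys2 where ys: "ys = ys1 @ x # ys2"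
    by (metis list.set_intros(1) split_list)
  have ys_rest: "distinct (ys1 @ ys2)" "set xs = set (ys1 @ ys2)" "sorted_wrt R (ys1 @ ys2)"
    using Cons.prems(1,2,3,5) ys by (auto simp: sorted_wrt_append)
  have "\<forall>y\<in>set ys1. commute (f x) (f y)"
    using Cons.prems(4,5,6) ys ys_rest(2) by (auto simp: sorted_wrt_append)
  then have move_x: "f x \<circ> fold f ys1 = fold f ys1 \<circ> f x"
    by (rule comp_fold_commute)
  have IH: "fold f xs = fold f (ys1 @ ys2)"
    using Cons.prems(1,4,6) ys_rest by (intro Cons.IH) auto
  have "fold f ys = fold f ys2 \<circ> (f x \<circ> fold f ys1)" using ys by (simp add: fun_eq_iff)
  also have "\<dots> = fold f (ys1 @ ys2) \<circ> f x" by (simp add: move_x comp_assoc)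
  also have "\<dots> = fold f (x # xs)" by (simp add: IH)
  finally show ?case by simp
qed

lemma linear_extension_sorted_wrt:
  assumes "linear_extension U prec xs"
  shows "sorted_wrt (\<lambda>a b. \<not> prec b a) xs"
  using assms unfolding sorted_wrt_iff_nth_less linear_extension_def
  by (meson less_trans less_irrefl)

lemma CvT_order_incomparable_in_C:
  assumes "CvT_order C T prec" "x \<in> C \<union> T" "y \<in> C \<union> T" "x \<noteq> y"
    and "\<not> comparable prec x y"
  shows "x \<in> C" "y \<in> C"
  using assms unfolding CvT_order_def comparable_def by blast+

lemma antichain_extends_to_Cv_set:
  assumes "finite C" "A \<subseteq> C"
    and "\<forall>p\<in>A. \<forall>q\<in>A. \<not> comparable prec p q"
    and irrefl: "\<forall>p\<in>C. \<not> prec p p"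
  obtains Ci where "Cv_set C prec Ci" "A \<subseteq> Ci"
proof -
  define antichains where
    "antichains = {B. B \<subseteq> C \<and> (\<forall>p\<in>B. \<forall>q\<in>B. \<not> comparable prec p q)}"
  have "finite antichains"
    unfolding antichains_def using \<open>finite C\<close> by simp
  moreover have "A \<in> antichains"
    unfolding antichains_def using assms by blast
  ultimately obtain M where M: "M \<in> antichains" "A \<subseteq> M"
    and maximal: "\<forall>B\<in>antichains. M \<subseteq> B \<longrightarrow> M = B"
    using finite_has_maximal2[of antichains A] by auto
  have "Cv_set C prec M"
    unfolding Cv_set_def
  proof (intro conjI ballI)
    show "M \<subseteq> C" "\<And>p q. p \<in> M \<Longrightarrow> q \<in> M \<Longrightarrow> \<not> comparable prec p q"
      using M(1) unfolding antichains_def by blast+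
  next
    fix p assume p: "p \<in> C - M"
    show "\<exists>q\<in>M. comparable prec p q"
    proof (rule ccontr)
      assume "\<not> (\<exists>q\<in>M. comparable prec p q)"
      then have "insert p M \<in> antichains"
        using M(1) p irrefl unfolding antichains_def comparable_def by auto
      then show False using maximal p by blast
    qed
  qed
  then show thesis using M(2) by (rule that)
qed

theorem theorem1:
  fixes C T :: "'u set" and prec :: "'u \<Rightarrow> 'u \<Rightarrow> bool"
    and app :: "'u \<Rightarrow> 's \<Rightarrow> 's" and s0 :: 's
  assumes "finite (C \<union> T)"
    and "CvT_order C T prec"
    and "\<And>Ci p q. Cv_set C prec Ci \<Longrightarrow> p \<in> Ci \<Longrightarrow> q \<in> Ci \<Longrightarrow> commute (app p) (app q)"
    and "linear_extension (C \<union> T) prec xs"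
    and "linear_extension (C \<union> T) prec ys"
  shows "result_state app s0 xs = result_state app s0 ys"
proof -
  have irrefl: "\<forall>p\<in>C. \<not> prec p p"
    using assms(2) unfolding CvT_order_def strict_po_on_def by blast
  have incomparable_commute: "commute (app x) (app y)"
    if "x \<in> C \<union> T" "y \<in> C \<union> T" "\<not> prec x y" "\<not> prec y x" for x y
  proof (cases "x = y")
    case False
    have incomparable: "\<not> comparable prec x y"
      using that unfolding comparable_def by simp
    have "x \<in> C" "y \<in> C"
      using CvT_order_incomparable_in_C[OF assms(2) that(1,2) False incomparable] by auto
    moreover have "\<forall>p\<in>{x, y}. \<forall>q\<in>{x, y}. \<not> comparable prec p q"
      using incomparable irrefl \<open>x \<in> C\<close> \<open>y \<in> C\<close> unfolding comparable_def by auto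
    ultimately obtain Ci where "Cv_set C prec Ci" "{x, y} \<subseteq> Ci"
      using antichain_extends_to_Cv_set[of C "{x, y}" prec] assms(1) irrefl by auto
    then show ?thesis using assms(3) by blast
  qed (simp add: commute_def)
  have "fold app xs = fold app ys"
  proof (rule fold_eq_if_sorted_wrt_commute[where R = "\<lambda>a b. \<not> prec b a"])
    show "distinct xs" "distinct ys" "set xs = set ys"
      using assms(4,5) by (simp_all add: linear_extension_def)
    show "sorted_wrt (\<lambda>a b. \<not> prec b a) xs" "sorted_wrt (\<lambda>a b. \<not> prec b a) ys"
      using assms(4,5) by (simp_all add: linear_extension_sorted_wrt)
    show "\<forall>x\<in>set xs. \<forall>y\<in>set xs. \<not> prec y x \<longrightarrow> \<not> prec x y \<longrightarrow> commute (app x) (app y)"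
      using assms(4) incomparable_commute by (simp add: linear_extension_def)
  qed
  then show ?thesis by (simp add: result_state_def)
qed

end
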